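(* Let $d\in\mathbb{Z}_{\ge1}$, $\gamma\in\mathbb{Z}_{\ge2}$, and let integers $y(\ell),x^{\mathrm{bin}}(\ell),z(\ell)$ ($\ell\in\{0,\dots,d-1\}$) and $r(\ell)$ ($\ell\in\{0,\dots,d\}$) form a solution of the constraint system $\mathcal{S}(d,\gamma)$. Then for every $\ell\in\{0,\dots,d-1\}$: $$r(\ell)=\begin{cases} r(\ell+1), & \text{if } r(\ell+1)<\gamma^{2^\ell},\\ r(\ell+1)/\gamma^{2^\ell}, & \text{if } r(\ell+1)\ge\gamma^{2^\ell},\end{cases}$$ and $r(\ell)\le\gamma^{2^\ell}-1$ for every $\ell\in\{0,\dots,d\}$.
   Context: Constraint system $\mathcal{S}(d,\gamma)$: for given integers $d\ge1$, $\gamma\ge2$, integer variables $y(\ell),x^{\mathrm{bin}}(\ell),z(\ell)$ for $\ell\in\{0,\dots,d-1\}$ and $r(\ell)$ for $\ell\in\{0,\dots,d\}$, subject to, for every $\ell\in\{0,\dots,d-1\}$ (writing $g_\ell:=\gamma^{2^\ell}$): (C1) $y(\ell)\ge0$; (C2) $y(\ell)\le r(\ell+1)/g_\ell+1/(g_\ell+1)$; (C3) $y(\ell)\ge r(\ell+1)/g_\ell-(g_\ell-1)/g_\ell$; (C4) $x^{\mathrm{bin}}(\ell)\ge0$; (C5) $x^{\mathrm{bin}}(\ell)\le1$; (C6) $x^{\mathrm{bin}}(\ell)\le y(\ell)$; (C7) $y(\ell)\le(g_\ell+1)x^{\mathrm{bin}}(\ell)$; (C8) $r(\ell)\ge0$;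 (C9) $(g_\ell-1)z(\ell)+r(\ell)=r(\ell+1)$; (C10) $z(\ell)\ge0$; (C11) $z(\ell)\ge -g_\ell+g_\ell x^{\mathrm{bin}}(\ell)+r(\ell)$; (C12) $z(\ell)\le g_\ell x^{\mathrm{bin}}(\ell)$; (C13) $z(\ell)\le r(\ell)$; and additionally $r(0)=1$, $r(d)\ge2$, $r(d)\le\gamma^{2^d-1}$. *)

theory Defs
  imports Complex_Main
begin

definition gpow :: "int \<Rightarrow> nat \<Rightarrow> int" where
  "gpow \<gamma> l = \<gamma> ^ (2 ^ l)"

definition constraint_system ::
  "nat \<Rightarrow> int \<Rightarrow> (nat \<Rightarrow> int) \<Rightarrow> (nat \<Rightarrow> int) \<Rightarrow> (nat \<Rightarrow> int) \<Rightarrow> (nat \<Rightarrow> int) \<Rightarrow> bool" where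
  "constraint_system d \<gamma> y xbin z r \<longleftrightarrow>
     (\<forall>l<d. let g = gpow \<gamma> l in
        y l \<ge> 0 \<and>
        real_of_int (y l) \<le> real_of_int (r (l+1)) / real_of_int g + 1 / (real_of_int g + 1) \<and>
        real_of_int (y l) \<ge> real_of_int (r (l+1)) / real_of_int g - (real_of_int g - 1) / real_of_int g \<and>
        xbin l \<ge> 0 \<and>
        xbin l \<le> 1 \<and>
        xbin l \<le> y l \<and>
        y l \<le> (g + 1) * xbin l \<and>
        r l \<ge> 0 \<and>
        (g - 1) * z l + r l = r (l+1) \<and>
        z l \<ge> 0 \<and>
        z l \<ge> - g + g * xbin l + r l \<and>
        z l \<le> g * xbin l \<and>
        z l \<le> r l) \<and>
     r 0 = 1 \<and> r d \<ge> 2 \<and> r d \<le> \<gamma> ^ (2 ^ d - 1)"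

end

theory Submission
  imports Defs
begin

text \<open>At level l, (C2) and (C3) force y(l) to be the integer quotient of r(l+1) by g_l, so
  (C6) and (C7) make x(l) the indicator of r(l+1) \<ge> g_l. Accordingly (C11)--(C13) force
  z(l) = r(l) or z(l) = 0, and (C9) says that r(l) is r(l+1)/g_l or r(l+1). Since
  g_(l+1) = g_l^2, the bound r(l+1) < g_(l+1) yields r(l) < g_l in either case, so the bound
  propagates downwards from r(d) \<le> \<gamma>^(2^d - 1) < g_d.\<close>

text \<open>Constraints (C1)--(C13) of a single level, with g = g_l, r = r(l) and r' = r(l+1).\<close>
definition level_constraints :: "int \<Rightarrow> int \<Rightarrow> int \<Rightarrow> int \<Rightarrow> int \<Rightarrow> int \<Rightarrow> bool" where
  "level_constraints g y x z r r' \<longleftrightarrow>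
     y \<ge> 0 \<and>
     real_of_int y \<le> real_of_int r' / real_of_int g + 1 / (real_of_int g + 1) \<and>
     real_of_int y \<ge> real_of_int r' / real_of_int g - (real_of_int g - 1) / real_of_int g \<and>
     x \<ge> 0 \<and> x \<le> 1 \<and> x \<le> y \<and> y \<le> (g + 1) * x \<and>
     r \<ge> 0 \<and> (g - 1) * z + r = r' \<and>
     z \<ge> 0 \<and> z \<ge> - g + g * x + r \<and> z \<le> g * x \<and> z \<le> r"

lemma constraint_system_iff_level_constraints:
  "constraint_system d \<gamma> y xbin z r \<longleftrightarrow>
     (\<forall>l<d. level_constraints (gpow \<gamma> l) (y l) (xbin l) (z l) (r l) (r (l+1))) \<and>
     r 0 = 1 \<and> r d \<ge> 2 \<and> r d \<le> \<gamma> ^ (2 ^ d - 1)"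
  by (simp add: constraint_system_def level_constraints_def Let_def)

lemma eq_div_of_real_bounds:
  fixes g y r' :: int
  assumes "g > 0"
    and upper: "real_of_int y \<le> real_of_int r' / real_of_int g + 1 / (real_of_int g + 1)"
    and lower: "real_of_int y \<ge> real_of_int r' / real_of_int g - (real_of_int g - 1) / real_of_int g"
  shows "y = r' div g"
proof -
  have gpos: "real_of_int g > 0"
    using \<open>g > 0\<close> by simp
  have "real_of_int (y * g) \<le> (real_of_int r' / real_of_int g + 1 / (real_of_int g + 1)) * real_of_int g"
    using upper \<open>g > 0\<close> by (simp add: mult_right_mono)
  also have "\<dots> = real_of_int r' + real_of_int g / (real_of_int g + 1)"
    using gpos by (simp add: distrib_right)
  also have "\<dots> < real_of_int (r' + 1)"
    using gpos by simp
  finally have "y * g \<le> r'"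
    by linarith
  moreover have "real_of_int (y * g) \<ge> real_of_int (r' - g + 1)"
    using lower gpos by (simp add: field_simps)
  then have "r' - g + 1 \<le> y * g"
    by (simp only: of_int_le_iff)
  then have "r' < (y + 1) * g"
    by (simp add: algebra_simps)
  ultimately show ?thesis
    by (intro int_div_pos_eq[of r' g y "r' - g * y", symmetric]) (simp_all add: algebra_simps)
qed

lemma level_constraints_cases:
  assumes "level_constraints g y x z r r'" and "g \<ge> 2"
  shows "(r' < g \<and> r = r') \<or> (r' \<ge> g \<and> g * r = r')"
proof -
  have y: "y = r' div g"
    using assms by (intro eq_div_of_real_bounds) (auto simp: level_constraints_def)
  have "x = 0 \<or> x = 1"
    using assms(1) by (auto simp: level_constraints_def)
  then show ?thesis
  proof
    assume "x = 0"
    with assms(1) have "y = 0" and "z = 0"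
      by (auto simp: level_constraints_def)
    from \<open>y = 0\<close> y \<open>g \<ge> 2\<close> have "r' < g"
      by (auto simp: zdiv_eq_0_iff)
    moreover from \<open>z = 0\<close> assms(1) have "r = r'"
      by (simp add: level_constraints_def)
    ultimately show ?thesis
      by simp
  next
    assume "x = 1"
    with assms(1) have "y \<ge> 1" and "z = r"
      by (auto simp: level_constraints_def)
    from \<open>y \<ge> 1\<close> y \<open>g \<ge> 2\<close> have "r' \<ge> g"
      using pos_imp_zdiv_pos_iff[of g r'] by simp
    moreover from \<open>z = r\<close> assms(1) have "g * r = r'"
      by (simp add: level_constraints_def algebra_simps)
    ultimately show ?thesis
      by simp
  qed
qed

lemma level_constraints_eq:
  assumes "level_constraints g y x z r r'" and "g \<ge> 2"
  shows "real_of_int r = (if r' < g then real_of_int r' else real_of_int r' / real_of_int g)"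
  using level_constraints_cases[OF assms]
proof
  assume "r' \<ge> g \<and> g * r = r'"
  then have "real_of_int r' = real_of_int g * real_of_int r" and "\<not> r' < g"
    by (metis of_int_mult, simp)
  with \<open>g \<ge> 2\<close> show ?thesis
    by simp
qed auto

lemma level_constraints_less:
  assumes "level_constraints g y x z r r'" and "g \<ge> 2" and "r' < g * g"
  shows "r < g"
  using level_constraints_cases[OF assms(1,2)]
proof
  assume "r' \<ge> g \<and> g * r = r'"
  with \<open>r' < g * g\<close> have "g * r < g * g"
    by simp
  with \<open>g \<ge> 2\<close> show ?thesis
    by (simp add: mult_less_cancel_left_pos)
qed auto

lemma gpow_ge_two:
  assumes "\<gamma> \<ge> 2"
  shows "gpow \<gamma> l \<ge> 2"
proof -
  have "\<gamma> \<le> \<gamma> ^ (2 ^ l)"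
    using assms by (intro self_le_power) auto
  with assms show ?thesis
    unfolding gpow_def by linarith
qed

lemma gpow_Suc: "gpow \<gamma> (Suc l) = gpow \<gamma> l * gpow \<gamma> l"
  by (simp add: gpow_def mult_2 power_add)

lemma power_pred_less_gpow:
  assumes "\<gamma> \<ge> 2"
  shows "\<gamma> ^ (2 ^ d - 1) < gpow \<gamma> d"
proof -
  have "(2::nat) ^ d = Suc (2 ^ d - 1)"
    by simp
  then have "gpow \<gamma> d = \<gamma> * \<gamma> ^ (2 ^ d - 1)"
    unfolding gpow_def by (metis power_Suc)
  moreover have "\<gamma> ^ (2 ^ d - 1) > 0"
    using assms by simp
  ultimately show ?thesis
    using assms by simp
qed

theorem mainTheorem6:
  fixes d :: nat and \<gamma> :: int and y xbin z r :: "nat \<Rightarrow> int"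
  assumes "d \<ge> 1" and "\<gamma> \<ge> 2"
    and "constraint_system d \<gamma> y xbin z r"
  shows "(\<forall>l<d. real_of_int (r l) =
            (if r (l+1) < gpow \<gamma> l then real_of_int (r (l+1))
             else real_of_int (r (l+1)) / real_of_int (gpow \<gamma> l)))
         \<and> (\<forall>l\<le>d. r l \<le> gpow \<gamma> l - 1)"
proof -
  have levels: "\<And>l. l < d \<Longrightarrow> level_constraints (gpow \<gamma> l) (y l) (xbin l) (z l) (r l) (r (l+1))"
    and top: "r d \<le> \<gamma> ^ (2 ^ d - 1)"
    using assms(3) by (simp_all add: constraint_system_iff_level_constraints)
  have "r l < gpow \<gamma> l" if "l \<le> d" for l
    using that
  proof (induction rule: inc_induct)
    case base
    show ?case
      using top power_pred_less_gpow[OF assms(2)] by (rule le_less_trans)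
  next
    case (step l)
    then have "r (l+1) < gpow \<gamma> l * gpow \<gamma> l"
      by (simp add: gpow_Suc)
    with levels[OF \<open>l < d\<close>] gpow_ge_two[OF assms(2)] show ?case
      by (rule level_constraints_less)
  qed
  moreover have "real_of_int (r l) =
      (if r (l+1) < gpow \<gamma> l then real_of_int (r (l+1))
       else real_of_int (r (l+1)) / real_of_int (gpow \<gamma> l))" if "l < d" for l
    using levels[OF that] gpow_ge_two[OF assms(2)] by (rule level_constraints_eq)
  ultimately show ?thesis
    by auto
qed

end
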